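(* Let $C=C_{\{\mathcal{I}_n,\mathcal{J}_n\}}$ be a nice Cantor set, let $0<c<1$ be a constant with $J_{n,i}\cap cI_{n,i}\neq\emptyset$ for all $n,i$, and assume $|J_{n,i}|<\frac{1-c}{3}|I_{n,i}|$ for all $n,i$. Then there is a constant $c'>0$ such that for any two distinct $J,J'\in\mathcal{J}$, if $K$ is the interval between $J$ and $J'$, then $|K|\ge c'\min\{|J|,|J'|\}$.
   Context: A Cantor construction $\{\mathcal{I}_n,\mathcal{J}_n\}_n$: for each $n\in\mathbb{N}$, $\mathcal{I}_n=\{I_{n,i}\}_i$ is a collection of closed intervals with mutually disjoint interiors and $\mathcal{J}_n=\{J_{n,i}\}_i$ a collection of open intervals with $J_{n,i}\subset I_{n,i}$, such that each $I_{n+1,i}$ is contained in some $I_{n,j}$, $\bigcup\mathcal{I}_{n+1}=\bigcup\mathcal{I}_n\setminus\bigcup\mathcal{J}_n$, $\sup_j|I_{n,j}|\to0$, and $\bigcup\mathcal{I}_1$ is bounded; $C=\bigcap_n\bigcup_iI_{n,i}$, $\mathcal{I}=\bigcup_n\mathcal{I}_n$, $\mathcal{J}=\bigcup_n\mathcal{J}_n$. Nice: there is $0<c<1$ with $cI_{n,i}\cap J_{n,i}\neq\emptyset$ for all $n,i$ ($cI$ the interval concentric with $I$ of length $c|I|$). *)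

theory Defs
  imports "HOL-Analysis.Analysis"
begin

text \<open>An interval is encoded by its endpoints (lo, hi).
  Levels are indexed by n :: nat starting at 0; the indices of the n-th
  level range over the set Idx n of some index type.\<close>

definition ilen :: "real \<times> real \<Rightarrow> real" where
  "ilen p = snd p - fst p"

definition cl_iv :: "real \<times> real \<Rightarrow> real set" where
  "cl_iv p = {fst p .. snd p}"

definition op_iv :: "real \<times> real \<Rightarrow> real set" where
  "op_iv p = {fst p <..< snd p}"

definition scale_iv :: "real \<Rightarrow> real \<times> real \<Rightarrow> real set" where
  "scale_iv c p = {(fst p + snd p) / 2 - c * ilen p / 2 .. (fst p + snd p) / 2 + c * ilen p / 2}"

definition cantor_construction ::
  "(nat \<Rightarrow> 'i set) \<Rightarrow> (nat \<Rightarrow> 'i \<Rightarrow> real \<times> real) \<Rightarrow> (nat \<Rightarrow> 'i \<Rightarrow> real \<times> real) \<Rightarrow> bool" where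
  "cantor_construction Idx I J \<longleftrightarrow>
     (\<forall>n. \<forall>i\<in>Idx n. fst (I n i) \<le> snd (I n i)) \<and>
     (\<forall>n. \<forall>i\<in>Idx n. fst (J n i) \<le> snd (J n i) \<and> op_iv (J n i) \<subseteq> cl_iv (I n i)) \<and>
     (\<forall>n. \<forall>i\<in>Idx n. \<forall>j\<in>Idx n. i \<noteq> j \<longrightarrow>
          interior (cl_iv (I n i)) \<inter> interior (cl_iv (I n j)) = {}) \<and>
     (\<forall>n. \<forall>i\<in>Idx (Suc n). \<exists>j\<in>Idx n. cl_iv (I (Suc n) i) \<subseteq> cl_iv (I n j)) \<and>
     (\<forall>n. (\<Union>i\<in>Idx (Suc n). cl_iv (I (Suc n) i)) =
          (\<Union>i\<in>Idx n. cl_iv (I n i)) - (\<Union>i\<in>Idx n. op_iv (J n i))) \<and>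
     (\<forall>\<epsilon>>0. \<exists>N. \<forall>n\<ge>N. \<forall>i\<in>Idx n. ilen (I n i) \<le> \<epsilon>) \<and>
     bounded (\<Union>i\<in>Idx 0. cl_iv (I 0 i))"

definition nice_const ::
  "(nat \<Rightarrow> 'i set) \<Rightarrow> (nat \<Rightarrow> 'i \<Rightarrow> real \<times> real) \<Rightarrow> (nat \<Rightarrow> 'i \<Rightarrow> real \<times> real) \<Rightarrow> real \<Rightarrow> bool" where
  "nice_const Idx I J c \<longleftrightarrow> 0 < c \<and> c < 1 \<and>
     (\<forall>n. \<forall>i\<in>Idx n. scale_iv c (I n i) \<inter> op_iv (J n i) \<noteq> {})"

definition between_len :: "real \<times> real \<Rightarrow> real \<times> real \<Rightarrow> real" where
  "between_len p q = (if snd p \<le> fst q then fst q - snd p else fst p - snd q)"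

end

theory Submission
  imports Defs
begin

text \<open>Since J meets cI and is shorter than (1-c)/3 |I|, it keeps a distance larger than |J|/2
  from both endpoints of I.  If J, J' are distinct gaps with J' of the deeper level, then J
  misses the interior of the interval I' containing J' (for equal levels because the intervals
  of a level do not overlap, for deeper levels because J was removed before I' was built).
  Hence the interval between J and J' contains one of the two margins of J' in I', so
  c' = 1/2 works.\<close>

lemma centred_small_interval_margins:
  fixes c :: real and p q :: "real \<times> real"
  assumes "scale_iv c q \<inter> op_iv p \<noteq> {}" and "ilen p < (1 - c) / 3 * ilen q"
  shows "fst q + ilen p / 2 < fst p" and "snd p + ilen p / 2 < snd q" and "fst p < snd p"
proof -
  obtain x where x: "x \<in> scale_iv c q" "x \<in> op_iv p" using assms(1) by blast
  define C where "C = c * ilen q"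
  have p: "fst p < x" "x < snd p" using x(2) by (auto simp: op_iv_def)
  have q: "(fst q + snd q) / 2 - C / 2 \<le> x" "x \<le> (fst q + snd q) / 2 + C / 2"
    using x(1) by (auto simp: scale_iv_def C_def)
  have small: "ilen p < ilen q / 3 - C / 3"
    using assms(2) by (simp add: C_def field_simps)
  have len: "ilen p = snd p - fst p" "ilen q = snd q - fst q" by (simp_all add: ilen_def)
  show "fst q + ilen p / 2 < fst p" using p q small len by argo
  show "snd p + ilen p / 2 < snd q" using p q small len by argo
  show "fst p < snd p" using p by linarith
qed

lemma disjoint_open_intervals_ordered:
  fixes p :: "real \<times> real"
  assumes "op_iv p \<inter> {a<..<b} = {}" and "fst p < snd p" and "a < b"
  shows "snd p \<le> a \<or> b \<le> fst p"
proof (rule ccontr)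
  assume "\<not> ?thesis"
  then have "(max (fst p) a + min (snd p) b) / 2 \<in> op_iv p \<inter> {a<..<b}"
    using assms(2,3) by (auto simp: op_iv_def max_def min_def)
  then show False using assms(1) by blast
qed

lemma between_len_ge_margin:
  fixes p q r :: "real \<times> real"
  assumes "snd p \<le> fst r \<or> snd r \<le> fst p" and "fst p < snd p" and "fst q < snd q"
    and "fst r + ilen q / 2 < fst q" and "snd q + ilen q / 2 < snd r"
  shows "ilen q / 2 \<le> between_len p q" and "ilen q / 2 \<le> between_len q p"
proof -
  show "ilen q / 2 \<le> between_len p q" using assms unfolding between_len_def ilen_def by argo
  show "ilen q / 2 \<le> between_len q p" using assms unfolding between_len_def ilen_def by argo
qed

lemma cantor_constructionD:
  assumes "cantor_construction Idx I J"
  shows cantor_gap_in_interval: "i \<in> Idx n \<Longrightarrow> op_iv (J n i) \<subseteq> cl_iv (I n i)"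
    and cantor_intervals_nonoverlapping: "\<lbrakk>i \<in> Idx n; j \<in> Idx n; i \<noteq> j\<rbrakk> \<Longrightarrow>
      interior (cl_iv (I n i)) \<inter> interior (cl_iv (I n j)) = {}"
    and cantor_next_level: "(\<Union>i\<in>Idx (Suc n). cl_iv (I (Suc n) i)) =
      (\<Union>i\<in>Idx n. cl_iv (I n i)) - (\<Union>i\<in>Idx n. op_iv (J n i))"
  using assms unfolding cantor_construction_def by simp_all

lemma cantor_gap_margins:
  assumes "nice_const Idx I J c"
    and "\<forall>n. \<forall>i\<in>Idx n. ilen (J n i) < (1 - c) / 3 * ilen (I n i)"
    and "i \<in> Idx n"
  shows "fst (I n i) + ilen (J n i) / 2 < fst (J n i)"
    and "snd (J n i) + ilen (J n i) / 2 < snd (I n i)"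
    and "fst (J n i) < snd (J n i)"
proof -
  have "scale_iv c (I n i) \<inter> op_iv (J n i) \<noteq> {}" using assms(1,3) by (simp add: nice_const_def)
  moreover have "ilen (J n i) < (1 - c) / 3 * ilen (I n i)" using assms(2,3) by blast
  ultimately show "fst (I n i) + ilen (J n i) / 2 < fst (J n i)"
    and "snd (J n i) + ilen (J n i) / 2 < snd (I n i)"
    and "fst (J n i) < snd (J n i)"
    by (rule centred_small_interval_margins)+
qed

lemma cantor_level_unions_decreasing:
  assumes "cantor_construction Idx I J" and "n \<le> m"
  shows "(\<Union>i\<in>Idx m. cl_iv (I m i)) \<subseteq> (\<Union>i\<in>Idx n. cl_iv (I n i))"
  using assms(2)
proof (induction m rule: dec_induct)
  case (step k)
  have "(\<Union>i\<in>Idx (Suc k). cl_iv (I (Suc k) i)) \<subseteq> (\<Union>i\<in>Idx k. cl_iv (I k i))"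
    unfolding cantor_next_level[OF assms(1)] by blast
  then show ?case using step.IH by (rule order.trans)
qed simp

lemma cantor_gap_disjoint_deeper_interval:
  assumes cc: "cantor_construction Idx I J" and "i \<in> Idx n" and "j \<in> Idx m" and "n \<le> m"
    and "op_iv (J n i) \<noteq> op_iv (J m j)"
  shows "op_iv (J n i) \<inter> {fst (I m j)<..<snd (I m j)} = {}"
proof (cases "n = m")
  case True
  then have "i \<noteq> j" using assms(5) by auto
  have "op_iv (J n i) \<subseteq> cl_iv (I n i)" using cantor_gap_in_interval[OF cc assms(2)] .
  then have "op_iv (J n i) \<subseteq> interior (cl_iv (I n i))"
    by (simp add: interior_maximal op_iv_def)
  moreover have "interior (cl_iv (I n i)) \<inter> interior (cl_iv (I n j)) = {}"
    using cantor_intervals_nonoverlapping[OF cc assms(2)] assms(3) \<open>i \<noteq> j\<close> True by simp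
  moreover have "interior (cl_iv (I m j)) = {fst (I m j)<..<snd (I m j)}"
    by (simp add: cl_iv_def)
  ultimately show ?thesis using True by blast
next
  case False
  have "cl_iv (I m j) \<subseteq> (\<Union>i\<in>Idx (Suc n). cl_iv (I (Suc n) i))"
    using cantor_level_unions_decreasing[OF cc, of "Suc n" m] False assms(3,4) by auto
  then have "cl_iv (I m j) \<inter> op_iv (J n i) = {}" using cantor_next_level[OF cc, of n] assms(2) by blast
  moreover have "{fst (I m j)<..<snd (I m j)} \<subseteq> cl_iv (I m j)" by (auto simp: cl_iv_def)
  ultimately show ?thesis by blast
qed

lemma cantor_between_len_ge_half_deeper:
  assumes cc: "cantor_construction Idx I J" and nice: "nice_const Idx I J c"
    and small: "\<forall>n. \<forall>i\<in>Idx n. ilen (J n i) < (1 - c) / 3 * ilen (I n i)"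
    and "i \<in> Idx n" and "j \<in> Idx m" and "n \<le> m" and "op_iv (J n i) \<noteq> op_iv (J m j)"
  shows "ilen (J m j) / 2 \<le> between_len (J n i) (J m j)"
    and "ilen (J m j) / 2 \<le> between_len (J m j) (J n i)"
proof -
  note Mi = cantor_gap_margins[OF nice small \<open>i \<in> Idx n\<close>]
  note Mj = cantor_gap_margins[OF nice small \<open>j \<in> Idx m\<close>]
  have "fst (I m j) < snd (I m j)" using Mj unfolding ilen_def by argo
  with cantor_gap_disjoint_deeper_interval[OF cc assms(4-7)] Mi(3)
  have "snd (J n i) \<le> fst (I m j) \<or> snd (I m j) \<le> fst (J n i)"
    by (rule disjoint_open_intervals_ordered)
  from between_len_ge_margin[OF this Mi(3) Mj(3,1,2)]
  show "ilen (J m j) / 2 \<le> between_len (J n i) (J m j)"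
    and "ilen (J m j) / 2 \<le> between_len (J m j) (J n i)" .
qed

theorem lemma5p4:
  fixes Idx :: "nat \<Rightarrow> 'i set" and I J :: "nat \<Rightarrow> 'i \<Rightarrow> real \<times> real" and c :: real
  assumes "cantor_construction Idx I J"
    and "nice_const Idx I J c"
    and "\<forall>n. \<forall>i\<in>Idx n. ilen (J n i) < (1 - c) / 3 * ilen (I n i)"
  shows "\<exists>c'>0. \<forall>n i m j. i \<in> Idx n \<longrightarrow> j \<in> Idx m \<longrightarrow> op_iv (J n i) \<noteq> op_iv (J m j) \<longrightarrow>
           between_len (J n i) (J m j) \<ge> c' * min (ilen (J n i)) (ilen (J m j))"
proof (intro exI[of _ "1/2"] conjI allI impI)
  fix n i m j
  assume gaps: "i \<in> Idx n" "j \<in> Idx m" "op_iv (J n i) \<noteq> op_iv (J m j)"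
  note bound = cantor_between_len_ge_half_deeper[OF assms]
  have "min (ilen (J n i)) (ilen (J m j)) / 2 \<le> between_len (J n i) (J m j)"
  proof (cases "n \<le> m")
    case True
    have "ilen (J m j) / 2 \<le> between_len (J n i) (J m j)" using bound(1)[OF gaps(1,2) True gaps(3)] .
    then show ?thesis by linarith
  next
    case False
    then have "m \<le> n" by simp
    then have "ilen (J n i) / 2 \<le> between_len (J n i) (J m j)"
      using bound(2)[OF gaps(2,1)] gaps(3) by simp
    then show ?thesis by linarith
  qed
  then show "between_len (J n i) (J m j) \<ge> 1/2 * min (ilen (J n i)) (ilen (J m j))" by simp
qed simp

end
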